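(* Let $\alpha$ be a non-zero algebraic number of degree at most $2$. If $\gamma\in\mathbb Q(\alpha)$, $\gamma\neq0$, satisfies $M(\gamma)>M(\alpha)$, then $M(\gamma)>M(\alpha)+\dfrac{1}{16\,M(\alpha)^4}$.
   Context: For a non-zero algebraic number $\gamma$ with minimal polynomial $A\prod_{n=1}^N(x-\gamma_n)$ over $\mathbb Z$ (primitive, $A>0$), its Mahler measure is $M(\gamma)=A\prod_{n=1}^N\max\{1,|\gamma_n|\}$. *)

theory Defs
  imports "HOL-Analysis.Analysis" "HOL-Computational_Algebra.Computational_Algebra"
begin

definition min_int_poly :: "complex \<Rightarrow> int poly" where
  "min_int_poly \<alpha> = (THE p. irreducible p \<and> content p = 1 \<and> lead_coeff p > 0 \<and>
      poly (map_poly of_int p) \<alpha> = 0)"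

definition mahler_poly :: "int poly \<Rightarrow> real" where
  "mahler_poly p = \<bar>real_of_int (lead_coeff p)\<bar> *
      (\<Prod>r\<in>#proots (map_poly of_int p :: complex poly). max 1 (cmod r))"

definition mahler_measure :: "complex \<Rightarrow> real" where
  "mahler_measure \<gamma> = mahler_poly (min_int_poly \<gamma>)"

definition alg_degree :: "complex \<Rightarrow> nat" where
  "alg_degree \<alpha> = degree (min_int_poly \<alpha>)"

definition is_subfield :: "complex set \<Rightarrow> bool" where
  "is_subfield F \<longleftrightarrow> 0 \<in> F \<and> 1 \<in> F \<and>
     (\<forall>x\<in>F. \<forall>y\<in>F. x + y \<in> F \<and> x * y \<in> F) \<and> (\<forall>x\<in>F. - x \<in> F) \<and>
     (\<forall>x\<in>F. x \<noteq> 0 \<longrightarrow> inverse x \<in> F)"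

definition rat_adjoin :: "complex \<Rightarrow> complex set" where
  "rat_adjoin \<alpha> = \<Inter>{F. is_subfield F \<and> \<alpha> \<in> F}"

end

theory Submission
  imports Defs "Berlekamp_Zassenhaus.Factor_Bound"
begin

hide_const (open) Mahler_Measure.mahler_measure

(*
  Let \<alpha> be a root of A x^2 + B x + C, D = B^2 - 4AC its discriminant and \<delta> = 2A\<alpha> + B,
  so \<delta>^2 = D.  Say that M \<ge> 1 is represented (quad_repr \<delta> D M) if 2M = e + q \<delta> with
  e an integer, q rational, q^2 D an integer, and the "conjugate" e - q \<delta> has modulus
  at most 2M.  Every M(\<gamma>), \<gamma> \<noteq> 0 in Q(\<alpha>), is represented: \<gamma> = r + s\<alpha> has minimal
  polynomial a(x - \<gamma>)(x - \<gamma>'), and M(\<gamma>) = a max(1,|\<gamma>|) max(1,|\<gamma>'|) is an integer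
  unless exactly one of \<gamma>, \<gamma>' lies outside the unit disc; that one is then real, and
  2a|\<gamma>| = \<plusminus>(a(\<gamma> + \<gamma>') + a(\<gamma> - \<gamma>')) with a(\<gamma> - \<gamma>') a rational multiple of \<delta>.
  If M1 > M2 are represented, t = 2M1 - 2M2 = e + q \<delta> times its conjugate is a non-zero
  integer e^2 - q^2 D, while the conjugate has modulus at most 2M1 + 2M2; hence
  4 M1^2 \<ge> 4 M2^2 + 1, which implies the stated gap.  (Rational \<alpha> is the case \<delta> = D = 0.)
*)

(* The embedding Q \<rightarrow> C as a field homomorphism, so that gcds of rational polynomials
   can be transported to the complex numbers. *)
interpretation of_rat_complex: field_hom' "of_rat :: rat \<Rightarrow> complex"
  by unfold_locales

section \<open>Minimal integer polynomials\<close>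

lemma coprime_no_common_root:
  fixes p q :: "int poly" and x :: complex
  assumes "gcd p q = 1" "poly (of_int_poly p) x = 0" "poly (of_int_poly q) x = 0"
  shows False
proof -
  have "gcd (of_int_poly p :: rat poly) (of_int_poly q) = 1"
    using gcd_rat_to_gcd_int[of p q] assms(1) by simp
  hence "map_poly (of_rat :: rat \<Rightarrow> complex) (gcd (of_int_poly p :: rat poly) (of_int_poly q)) = 1"
    by simp
  hence coprime: "gcd (of_int_poly p :: complex poly) (of_int_poly q) = 1"
    unfolding of_rat_complex.map_poly_gcd by (simp add: map_poly_map_poly o_def)
  have "[:-x,1:] dvd of_int_poly p" "[:-x,1:] dvd (of_int_poly q :: complex poly)"
    using assms(2,3) poly_eq_0_iff_dvd by blast+
  hence "[:-x,1:] dvd (1 :: complex poly)" using coprime by (metis gcd_greatest)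
  thus False using is_unit_iff_degree[of "[:-x,1:]"] by simp
qed

lemma irreducible_root_dvd:
  fixes p q :: "int poly" and x :: complex
  assumes "irreducible p" "poly (of_int_poly p) x = 0" "poly (of_int_poly q) x = 0"
  shows "p dvd q"
proof -
  obtain k where k: "p = gcd p q * k" using gcd_dvd1[of p q] unfolding dvd_def by blast
  from irreducibleD[OF assms(1) k] show ?thesis
  proof
    assume "is_unit (gcd p q)"
    hence "gcd p q = 1" by (simp add: is_unit_gcd)
    from coprime_no_common_root[OF this assms(2,3)] show ?thesis ..
  next
    assume "is_unit k"
    hence "p dvd gcd p q" using k by (metis dvd_mult_unit_iff dvd_refl)
    thus ?thesis by (meson dvd_trans gcd_dvd2)
  qed
qed

lemma irreducible_root_poly_unique:
  fixes p q :: "int poly" and x :: complex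
  assumes "irreducible p" "irreducible q" "lead_coeff p > 0" "lead_coeff q > 0"
    and "poly (of_int_poly p) x = 0" "poly (of_int_poly q) x = 0"
  shows "p = q"
proof (rule associated_eqI)
  show "p dvd q" "q dvd p" using irreducible_root_dvd assms by blast+
  show "normalize p = p" "normalize q = q"
    using assms(3,4) by (simp_all add: normalize_poly_def)
qed

text \<open>Existence: some prime factor of a non-zero integer polynomial vanishing at x
  vanishes at x, and normalised prime factors are primitive with positive leading
  coefficient.\<close>
lemma irreducible_root_poly_exists:
  fixes x :: complex
  assumes "algebraic x"
  obtains p where "irreducible p" "content p = 1" "lead_coeff p > 0" "poly (of_int_poly p) x = 0"
proof -
  obtain f :: "int poly" where f0: "f \<noteq> 0" and fx: "poly (of_int_poly f) x = 0"
    using algebraicE'[OF assms] by blast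
  have "\<exists>q\<in>#M. poly (of_int_poly q) x = 0"
    if "poly (of_int_poly (prod_mset M)) x = 0" for M :: "int poly multiset"
    using that by (induction M) (auto simp: of_int_poly_hom.hom_mult)
  moreover have "f dvd prod_mset (prime_factorization f)"
    using associatedD2[OF prod_mset_prime_factorization_weak[OF f0]] .
  hence "poly (of_int_poly (prod_mset (prime_factorization f))) x = 0"
    using fx by (auto simp: dvd_def of_int_poly_hom.hom_mult)
  ultimately obtain q where "q \<in># prime_factorization f" and qx: "poly (of_int_poly q) x = 0"
    by blast
  hence prime: "prime q" by (simp add: in_prime_factors_imp_prime)
  hence irr: "irreducible q" by (intro prime_elem_imp_irreducible prime_imp_prime_elem)
  have "unit_factor q = 1" using prime unit_factor_normalize[of q] by auto
  hence "unit_factor (lead_coeff q) = 1" unfolding unit_factor_poly_def by (metis coeff_pCons_0 pCons_one)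
  hence lead: "lead_coeff q > 0" by (simp add: sgn_1_pos)
  have "degree q \<noteq> 0"
  proof
    assume "degree q = 0"
    then obtain c where "q = [:c:]" by (metis degree_eq_zeroE)
    thus False using lead qx by simp
  qed
  hence "content q = 1"
    using irreducible_imp_primitive[OF irr] by (simp add: primitive_iff_content_eq_1)
  with irr lead qx show ?thesis using that by blast
qed

lemma min_int_poly_props:
  fixes x :: complex
  assumes "algebraic x"
  shows "irreducible (min_int_poly x)" "content (min_int_poly x) = 1"
    "lead_coeff (min_int_poly x) > 0" "poly (of_int_poly (min_int_poly x)) x = 0"
proof -
  obtain p where p: "irreducible p" "content p = 1" "lead_coeff p > 0" "poly (of_int_poly p) x = 0"
    using irreducible_root_poly_exists[OF assms] by blast
  have "irreducible (min_int_poly x) \<and> content (min_int_poly x) = 1 \<and>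
      lead_coeff (min_int_poly x) > 0 \<and> poly (of_int_poly (min_int_poly x)) x = 0"
    unfolding min_int_poly_def by (rule theI[of _ p]) (use p irreducible_root_poly_unique in blast)+
  thus "irreducible (min_int_poly x)" "content (min_int_poly x) = 1"
    "lead_coeff (min_int_poly x) > 0" "poly (of_int_poly (min_int_poly x)) x = 0" by auto
qed

lemma min_int_poly_eqI:
  fixes x :: complex
  assumes "irreducible p" "content p = 1" "lead_coeff p > 0" "poly (of_int_poly p) x = 0"
  shows "min_int_poly x = p"
  unfolding min_int_poly_def
  by (rule the_equality) (use assms irreducible_root_poly_unique in blast)+

section \<open>Mahler measures of linear and quadratic polynomials\<close>

lemma mahler_poly_linear:
  fixes p :: "int poly" and a :: int and z :: complex
  assumes eq: "of_int_poly p = Polynomial.smult (of_int a) [:-z, 1:]" and a0: "a \<noteq> 0"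
  shows "mahler_poly p = \<bar>of_int a\<bar> * max 1 (cmod z)"
proof -
  have "lead_coeff (of_int_poly p :: complex poly) = of_int a" unfolding eq by simp
  hence "lead_coeff p = a" by simp
  moreover have "proots (of_int_poly p :: complex poly) = {#z#}"
    unfolding eq using a0 by (subst proots_smult, simp, simp only: proots_linear_factor minus_minus)
  ultimately show ?thesis unfolding mahler_poly_def by simp
qed

lemma mahler_poly_quadratic:
  fixes p :: "int poly" and a :: int and z1 z2 :: complex
  assumes eq: "of_int_poly p = Polynomial.smult (of_int a) ([:-z1, 1:] * [:-z2, 1:])" and a0: "a \<noteq> 0"
  shows "mahler_poly p = \<bar>of_int a\<bar> * max 1 (cmod z1) * max 1 (cmod z2)"
proof -
  have "lead_coeff (of_int_poly p :: complex poly) = of_int a" unfolding eq by (simp add: lead_coeff_mult)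
  hence "lead_coeff p = a" by simp
  moreover have "proots (of_int_poly p :: complex poly) = {#z1, z2#}"
    unfolding eq using a0
    by (subst proots_smult, simp, subst proots_mult, simp, simp,
        simp only: proots_linear_factor minus_minus, simp)
  ultimately show ?thesis unfolding mahler_poly_def by simp
qed

text \<open>The Mahler measure of a non-zero rational n/m in lowest terms is max m |n|, a
  positive integer; its minimal polynomial m x - n is linear.\<close>
lemma mahler_measure_rat:
  fixes g :: rat
  assumes g0: "g \<noteq> 0"
  shows "\<exists>k::int. k \<ge> 1 \<and> mahler_measure (of_rat g :: complex) = of_int k"
proof -
  obtain n m where q: "quotient_of g = (n, m)" by (cases "quotient_of g") auto
  have m0: "m > 0" using quotient_of_denom_pos[OF q] .
  have cg: "(of_rat g :: complex) = of_int n / of_int m"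
    using quotient_of_div[OF q] by (simp add: of_rat_divide)
  define p where "p = [:-n, m:]"
  have eq: "of_int_poly p = Polynomial.smult (of_int m) [:-(of_rat g :: complex), 1:]"
    unfolding p_def cg using m0 by simp
  have cont: "content p = 1"
    unfolding p_def using quotient_of_coprime[OF q] m0
    by (simp add: content_pCons coprime_iff_gcd_eq_1)
  have "degree p = 1" unfolding p_def using m0 by simp
  hence irr: "irreducible p"
    using irreducible_primitive_connect[of p] linear_irreducible\<^sub>d[of p] cont
    by (simp add: primitive_iff_content_eq_1)
  have "min_int_poly (of_rat g) = p"
    by (rule min_int_poly_eqI[OF irr cont]) (use m0 eq in \<open>simp_all add: p_def\<close>)
  hence M: "mahler_measure (of_rat g :: complex) = of_int m * max 1 (cmod (of_rat g :: complex))"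
    unfolding Defs.mahler_measure_def using mahler_poly_linear[OF eq] m0 by simp
  have "of_int m * cmod (of_rat g :: complex) = of_int \<bar>n\<bar>"
    unfolding cg using m0 by (simp add: norm_divide)
  hence "of_int m * max 1 (cmod (of_rat g :: complex)) = of_int (max m \<bar>n\<bar>)"
    using m0 by (simp add: max_mult_distrib_left)
  thus ?thesis unfolding M using m0 by (intro exI[of _ "max m \<bar>n\<bar>"]) auto
qed

lemma rat_adjoin_Rats:
  assumes "\<alpha> \<in> \<rat>"
  shows "rat_adjoin \<alpha> \<subseteq> \<rat>"
proof -
  have "is_subfield (\<rat> :: complex set)"
    unfolding is_subfield_def by (auto simp: Rats_add Rats_mult Rats_minus_iff Rats_inverse)
  thus ?thesis unfolding rat_adjoin_def using assms by blast
qed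

lemma rat_square_Ints:
  fixes m :: rat
  assumes "m^2 \<in> \<int>"
  shows "m \<in> \<int>"
proof -
  obtain z where z: "m^2 = of_int z" using assms by (metis Ints_cases)
  obtain a b where q: "quotient_of m = (a, b)" by (cases "quotient_of m") auto
  have b0: "b > 0" using quotient_of_denom_pos[OF q] .
  have mab: "m = of_int a / of_int b" using quotient_of_div[OF q] .
  have "of_int a ^ 2 = (of_int z * of_int b ^ 2 :: rat)"
    using z b0 unfolding mab by (simp add: field_simps power_divide)
  hence "a^2 = z * b^2" by (metis of_int_eq_iff of_int_mult of_int_power)
  hence "b dvd a^2" by (simp add: power2_eq_square)
  moreover have "coprime (a^2) b" using quotient_of_coprime[OF q] by simp
  ultimately have "is_unit b" using coprime_common_divisor[of "a^2" b b] by simp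
  hence "b = 1" using b0 by simp
  thus ?thesis using mab by simp
qed

section \<open>Quadratic irrationalities\<close>

lemma poly_linear_coeffs: "degree p \<le> 1 \<Longrightarrow> p = [:poly.coeff p 0, poly.coeff p 1:]"
  by (intro poly_eqI) (auto simp: coeff_pCons split: nat.split intro: coeff_eq_0)

lemma poly_quadratic_coeffs:
  "degree p \<le> 2 \<Longrightarrow> p = [:poly.coeff p 0, poly.coeff p 1, poly.coeff p 2:]"
  by (intro poly_eqI) (auto simp: coeff_pCons numeral_2_eq_2 split: nat.split intro: coeff_eq_0)

lemma int_poly_linear_root_Rats:
  fixes p :: "int poly" and x :: complex
  assumes "p \<noteq> 0" "degree p \<le> 1" "poly (of_int_poly p) x = 0"
  shows "x \<in> \<rat>"
proof -
  define c0 c1 where "c0 = poly.coeff p 0" and "c1 = poly.coeff p 1"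
  have p: "p = [:c0, c1:]" unfolding c0_def c1_def using assms(2) by (rule poly_linear_coeffs)
  have "of_int_poly p = [:of_int c0, of_int c1 :: complex:]"
    unfolding p by (rule poly_eqI) (simp add: coeff_map_poly coeff_pCons split: nat.split)
  hence root: "of_int c0 + of_int c1 * x = 0" using assms(3) by (simp add: mult.commute)
  have "c1 \<noteq> 0" using root assms(1) unfolding p by auto
  hence "x = of_rat (- of_int c0 / of_int c1)"
    using root by (simp add: of_rat_divide of_rat_minus field_simps eq_neg_iff_add_eq_0)
  thus ?thesis by simp
qed

lemma quadratic_mult:
  fixes \<alpha> :: complex and b c r1 s1 r2 s2 :: rat
  assumes rel: "\<alpha>^2 + of_rat b * \<alpha> + of_rat c = 0"
  shows "(of_rat r1 + of_rat s1 * \<alpha>) * (of_rat r2 + of_rat s2 * \<alpha>)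
    = of_rat (r1 * r2 - s1 * s2 * c) + of_rat (r1 * s2 + r2 * s1 - s1 * s2 * b) * \<alpha>"
proof -
  have "\<alpha> * \<alpha> = (\<alpha>^2 + of_rat b * \<alpha> + of_rat c) - of_rat b * \<alpha> - of_rat c"
    by (simp add: power2_eq_square)
  hence sq: "\<alpha> * \<alpha> = - of_rat b * \<alpha> - of_rat c" using rel by simp
  have "(of_rat r1 + of_rat s1 * \<alpha>) * (of_rat r2 + of_rat s2 * \<alpha>)
      = of_rat r1 * of_rat r2 + (of_rat r1 * of_rat s2 + of_rat r2 * of_rat s1) * \<alpha>
        + of_rat s1 * of_rat s2 * (\<alpha> * \<alpha>)"
    by (simp add: algebra_simps)
  also have "\<dots> = of_rat (r1 * r2 - s1 * s2 * c) + of_rat (r1 * s2 + r2 * s1 - s1 * s2 * b) * \<alpha>"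
    unfolding sq by (simp add: of_rat_add of_rat_mult of_rat_diff algebra_simps)
  finally show ?thesis .
qed

text \<open>If \<alpha> is an irrational root of a rational monic quadratic, then the numbers
  r + s \<alpha> with r, s rational form a field; inverses come from the norm
  (r + s \<alpha>)(r - s b - s \<alpha>) = r (r - s b) + s^2 c, which is non-zero for r + s \<alpha> \<noteq> 0.\<close>
lemma quadratic_span_subfield:
  fixes \<alpha> :: complex and b c :: rat
  assumes rel: "\<alpha>^2 + of_rat b * \<alpha> + of_rat c = 0" and irr: "\<alpha> \<notin> \<rat>"
  shows "is_subfield {of_rat r + of_rat s * \<alpha> | r s. True}" (is "is_subfield ?S")
proof -
  have mem: "of_rat r + of_rat s * \<alpha> \<in> ?S" for r s by blast
  have norm: "(of_rat r + of_rat s * \<alpha>) * (of_rat (r - s * b) - of_rat s * \<alpha>)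
      = of_rat (r * (r - s * b) + s * s * c)" for r s
    using quadratic_mult[OF rel, of r s "r - s * b" "- s"] by (simp add: of_rat_minus algebra_simps)
  show ?thesis unfolding is_subfield_def
  proof (intro conjI ballI impI)
    show "0 \<in> ?S" "1 \<in> ?S" using mem[of 0 0] mem[of 1 0] by simp_all
    fix x y assume "x \<in> ?S" "y \<in> ?S"
    then obtain r1 s1 r2 s2 where x: "x = of_rat r1 + of_rat s1 * \<alpha>" and y: "y = of_rat r2 + of_rat s2 * \<alpha>"
      by blast
    show "x + y \<in> ?S"
      using mem[of "r1 + r2" "s1 + s2"] unfolding x y by (simp add: of_rat_add algebra_simps)
    show "x * y \<in> ?S" unfolding x y quadratic_mult[OF rel] by (rule mem)
  next
    fix x assume "x \<in> ?S"
    then obtain r s where x: "x = of_rat r + of_rat s * \<alpha>" by blast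
    show "- x \<in> ?S" using mem[of "-r" "-s"] unfolding x by (simp add: of_rat_minus)
  next
    fix x assume "x \<in> ?S" "x \<noteq> 0"
    then obtain r s where x: "x = of_rat r + of_rat s * \<alpha>" and x0: "x \<noteq> 0" by blast
    define N where "N = r * (r - s * b) + s * s * c"
    have "N \<noteq> 0"
    proof
      assume "N = 0"
      hence "of_rat (r - s * b) - of_rat s * \<alpha> = 0"
        using norm[of r s] x x0 unfolding N_def[symmetric] by simp
      hence "of_rat (r - s * b) = of_rat s * \<alpha>" by simp
      moreover have "s \<noteq> 0" using calculation x x0 by auto
      ultimately have "\<alpha> = of_rat ((r - s * b) / s)" by (simp add: of_rat_divide field_simps)
      thus False using irr by simp
    qed
    hence "inverse x = of_rat ((r - s * b) / N) + of_rat (- s / N) * \<alpha>"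
      using norm[of r s] x0 unfolding x N_def[symmetric]
      by (simp add: field_simps of_rat_divide of_rat_minus)
    thus "inverse x \<in> ?S" using mem by simp
  qed
qed

lemma rat_adjoin_quadratic:
  fixes \<alpha> \<gamma> :: complex and b c :: rat
  assumes "\<alpha>^2 + of_rat b * \<alpha> + of_rat c = 0" "\<alpha> \<notin> \<rat>" "\<gamma> \<in> rat_adjoin \<alpha>"
  obtains r s where "\<gamma> = of_rat r + of_rat s * \<alpha>"
proof -
  have "\<alpha> \<in> {of_rat r + of_rat s * \<alpha> | r s. True}" by (rule CollectI, rule exI[of _ 0], auto)
  hence "rat_adjoin \<alpha> \<subseteq> {of_rat r + of_rat s * \<alpha> | r s. True}"
    unfolding rat_adjoin_def using quadratic_span_subfield[OF assms(1,2)] by blast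
  thus ?thesis using that assms(3) by blast
qed

lemma irreducible_quadratic:
  fixes p :: "int poly"
  assumes "degree p = 2" "content p = 1"
    and no_rat_root: "\<And>x. x \<in> \<rat> \<Longrightarrow> poly (of_int_poly p) (x :: complex) \<noteq> 0"
  shows "irreducible p"
proof -
  have "irreducible\<^sub>d p"
  proof (rule irreducible\<^sub>dI)
    fix q r :: "int poly"
    assume "0 < degree q" "degree q < degree p" "p = q * r"
    hence dq: "degree q = 1" and pqr: "p = q * r" using assms(1) by auto
    define q0 q1 where "q0 = poly.coeff q 0" and "q1 = poly.coeff q 1"
    have q: "q = [:q0, q1:]" unfolding q0_def q1_def using dq by (intro poly_linear_coeffs) simp
    have "q \<noteq> 0" using dq by auto
    hence "poly.coeff q (degree q) \<noteq> 0" by simp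
    hence q1: "q1 \<noteq> 0" unfolding q1_def dq .
    have "poly (of_int_poly q) (of_rat (- of_int q0 / of_int q1) :: complex) = 0"
      unfolding q using q1 by (simp add: of_rat_divide of_rat_minus field_simps)
    hence "poly (of_int_poly p) (of_rat (- of_int q0 / of_int q1) :: complex) = 0"
      unfolding pqr by (simp add: of_int_poly_hom.hom_mult)
    thus False using no_rat_root by simp
  qed (use assms(1) in simp)
  thus ?thesis using irreducible_primitive_connect[of p] assms(2)
    by (simp add: primitive_iff_content_eq_1)
qed

lemma rat_affine_irrational:
  fixes x :: complex and r s :: rat
  assumes "s \<noteq> 0" "x \<notin> \<rat>"
  shows "of_rat r + of_rat s * x \<notin> \<rat>"
proof
  assume "of_rat r + of_rat s * x \<in> \<rat>"
  then obtain y where "of_rat r + of_rat s * x = of_rat y" by (metis Rats_cases)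
  hence "x = of_rat ((y - r) / s)" using assms(1) by (simp add: of_rat_divide of_rat_diff field_simps)
  thus False using assms(2) by simp
qed

text \<open>Two numbers with rational sum and product are the roots of a primitive integer
  quadratic a x^2 + b x + c with a > 0 (clear the denominators of x^2 - T x + N).\<close>
lemma primitive_quadratic_vieta:
  fixes z1 z2 :: complex and T N :: rat
  assumes sum: "z1 + z2 = of_rat T" and prod: "z1 * z2 = of_rat N"
  obtains a b c :: int where "a > 0" "content [:c, b, a:] = 1"
    "of_int a * (z1 + z2) = - of_int b" "of_int a * (z1 * z2) = of_int c"
proof -
  obtain d p where dp: "rat_to_normalized_int_poly [:N, -T, 1:] = (d, p)"
    by (cases "rat_to_normalized_int_poly [:N, -T, 1:]") auto
  note normalized = rat_to_normalized_int_poly[OF dp]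
  have "[:N, -T, 1:] \<noteq> 0" by simp
  hence d0: "d > 0" and deg: "degree p = 2" and cont: "content p = 1"
    using normalized(2,4) normalized(3) by simp_all
  have coeffs: "poly.coeff [:N, -T, 1:] i = d * of_int (poly.coeff p i)" for i
    using arg_cong[OF normalized(1), of "\<lambda>f. poly.coeff f i"]
    by (simp add: of_int_hom.coeff_map_poly_hom)
  define a b c where "a = poly.coeff p 2" and "b = poly.coeff p 1" and "c = poly.coeff p 0"
  have p: "p = [:c, b, a:]" unfolding a_def b_def c_def using deg by (intro poly_quadratic_coeffs) simp
  have da: "d * of_int a = 1" and db: "d * of_int b = - T" and dc: "d * of_int c = N"
    using coeffs[of 2] coeffs[of 1] coeffs[of 0] by (simp_all add: a_def b_def c_def numeral_2_eq_2)
  have "0 < d * of_int a" using da by simp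
  hence "(0::rat) < of_int a" using d0 zero_less_mult_pos by blast
  hence a0: "a > 0" by simp
  have "T = - (d * of_int b)" using db by simp
  hence "of_int a * T = - ((d * of_int a) * of_int b)" by (simp add: algebra_simps)
  hence "of_int a * T = - of_int b" unfolding da by simp
  hence "of_rat (of_int a * T) = (- of_int b :: complex)" by (simp add: of_rat_minus)
  hence "of_int a * (z1 + z2) = - of_int b" unfolding sum by (simp add: of_rat_mult)
  moreover have "of_int a * N = (d * of_int a) * of_int c" unfolding dc[symmetric] by (simp add: algebra_simps)
  hence "of_rat (of_int a * N) = (of_int c :: complex)" unfolding da by simp
  hence "of_int a * (z1 * z2) = of_int c" unfolding prod by (simp add: of_rat_mult)
  ultimately show ?thesis using that a0 cont p by blast
qed

text \<open>If moreover both roots are irrational, this quadratic is the minimal polynomial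
  of each of them, so the Mahler measure is a max(1,|z1|) max(1,|z2|).\<close>
lemma mahler_measure_conjugates:
  fixes z1 z2 :: complex and a b c :: int
  assumes a0: "a > 0" and cont: "content [:c, b, a:] = 1"
    and sum: "of_int a * (z1 + z2) = - of_int b" and prod: "of_int a * (z1 * z2) = of_int c"
    and irr: "z1 \<notin> \<rat>" "z2 \<notin> \<rat>"
  shows "mahler_measure z1 = of_int a * max 1 (cmod z1) * max 1 (cmod z2)"
proof -
  define p where "p = [:c, b, a:]"
  have "of_int_poly p = [:of_int c, of_int b, of_int a :: complex:]"
    unfolding p_def by (rule poly_eqI) (simp add: coeff_map_poly coeff_pCons split: nat.split)
  also have "\<dots> = Polynomial.smult (of_int a) ([:-z1, 1:] * [:-z2, 1:])"
    using sum unfolding prod[symmetric] by (simp add: algebra_simps eq_neg_iff_add_eq_0)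
  finally have factor: "of_int_poly p = Polynomial.smult (of_int a) ([:-z1, 1:] * [:-z2, 1:])" .
  have "poly (of_int_poly p) x = of_int a * ((x - z1) * (x - z2))" for x :: complex
    unfolding factor by (simp add: algebra_simps)
  hence root: "poly (of_int_poly p) x = 0 \<longleftrightarrow> x = z1 \<or> x = z2" for x :: complex
    using a0 by simp
  have irreducible: "irreducible p"
    by (rule irreducible_quadratic) (use a0 cont root irr in \<open>auto simp: p_def\<close>)
  have "min_int_poly z1 = p"
    by (rule min_int_poly_eqI[OF irreducible]) (use a0 cont root in \<open>simp_all add: p_def\<close>)
  thus ?thesis
    unfolding Defs.mahler_measure_def using mahler_poly_quadratic[OF factor] a0 by simp
qed

section \<open>Representations of Mahler measures in Z[\<delta>]\<close>

definition quad_repr :: "complex \<Rightarrow> int \<Rightarrow> real \<Rightarrow> bool" where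
  "quad_repr \<delta> D M \<longleftrightarrow> M \<ge> 1 \<and> (\<exists>(e::int) (q::rat). q^2 * of_int D \<in> \<int> \<and>
     complex_of_real (2 * M) = of_int e + of_rat q * \<delta> \<and> cmod (of_int e - of_rat q * \<delta>) \<le> 2 * M)"

lemma quad_repr_int: "k \<ge> 1 \<Longrightarrow> quad_repr \<delta> D (of_int k)"
  unfolding quad_repr_def by (intro conjI exI[of _ "2 * k"] exI[of _ 0]) auto

lemma quad_repr_rational:
  assumes "z \<in> \<rat>" "z \<noteq> 0"
  shows "quad_repr \<delta> D (mahler_measure z)"
proof -
  obtain g where "z = of_rat g" using assms(1) by (metis Rats_cases)
  thus ?thesis using mahler_measure_rat[of g] assms(2) quad_repr_int by fastforce
qed

text \<open>If u + v and u v are real and |v| < |u|, then u is real: otherwise cnj u would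
  be a root of (x - u)(x - v) different from u, i.e. equal to v.\<close>
lemma dominant_root_real:
  fixes u v :: complex
  assumes "u + v \<in> \<real>" "u * v \<in> \<real>" "cmod v < cmod u"
  shows "u \<in> \<real>"
proof -
  have real: "cnj (u + v) = u + v" "cnj (u * v) = u * v" using assms(1,2) by (simp_all add: Reals_cnj_iff)
  have "(cnj u - u) * (cnj u - v) = cnj u * cnj u - cnj (u + v) * cnj u + cnj (u * v)"
    unfolding real by (simp add: algebra_simps)
  also have "\<dots> = 0" by (simp add: algebra_simps)
  finally have "cnj u = u \<or> cnj u = v" by simp
  moreover have "cnj u \<noteq> v" using assms(3) by (metis complex_mod_cnj less_irrefl)
  ultimately show ?thesis by (simp add: Reals_cnj_iff)
qed

text \<open>If the root u of a x^2 + b x + c dominates the other root v, then u is real and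
  a|u| has a representation: 2a|u| = \<plusminus>(-b + q \<delta>), with conjugate \<plusminus>2av.\<close>
lemma quad_repr_dominant_root:
  fixes u v \<delta> :: complex and a b c D :: int and q :: rat
  assumes a0: "a > 0" and sum: "of_int a * (u + v) = - of_int b" and prod: "of_int a * (u * v) = of_int c"
    and diff: "of_int a * (u - v) = of_rat q * \<delta>" and disc: "q^2 * of_int D \<in> \<int>"
    and dom: "cmod v < cmod u" and big: "1 \<le> cmod u"
  shows "quad_repr \<delta> D (of_int a * cmod u)"
proof -
  have a_ne: "(of_int a :: complex) \<noteq> 0" using a0 by simp
  have "u + v = - of_int b / of_int a" "u * v = of_int c / of_int a"
    using sum prod a_ne by (simp_all add: field_simps)
  hence "u + v \<in> \<real>" "u * v \<in> \<real>" by (simp_all add: Reals_divide)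
  hence real: "u \<in> \<real>" using dom by (rule dominant_root_real)
  define \<sigma> :: int where "\<sigma> = (if Re u \<ge> 0 then 1 else -1)"
  have \<sigma>: "\<sigma>^2 = 1" "cmod (of_int \<sigma> :: complex) = 1" unfolding \<sigma>_def by simp_all
  have "cmod u = \<bar>Re u\<bar>" using norm_of_real[where 'a = complex, of "Re u"] unfolding of_real_Re[OF real] .
  hence "cmod u = of_int \<sigma> * Re u" unfolding \<sigma>_def by simp
  hence abs_u: "complex_of_real (cmod u) = of_int \<sigma> * u" using of_real_Re[OF real] by simp
  have "2 * of_int a * u = of_int a * (u + v) + of_int a * (u - v)"
    "2 * of_int a * v = of_int a * (u + v) - of_int a * (u - v)" by (simp_all add: algebra_simps)
  hence u2: "2 * of_int a * u = - of_int b + of_rat q * \<delta>"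
    and v2: "2 * of_int a * v = - of_int b - of_rat q * \<delta>" unfolding sum diff by simp_all
  have "complex_of_real (2 * (of_int a * cmod u)) = of_int \<sigma> * (2 * of_int a * u)"
    using abs_u by simp
  also have "\<dots> = of_int (- \<sigma> * b) + of_rat (of_int \<sigma> * q) * \<delta>"
    unfolding u2 by (simp add: of_rat_mult algebra_simps)
  finally have rep: "complex_of_real (2 * (of_int a * cmod u)) = of_int (- \<sigma> * b) + of_rat (of_int \<sigma> * q) * \<delta>" .
  have "of_int (- \<sigma> * b) - of_rat (of_int \<sigma> * q) * \<delta> = of_int \<sigma> * (2 * of_int a * v)"
    unfolding v2 by (simp add: of_rat_mult algebra_simps)
  hence conj: "cmod (of_int (- \<sigma> * b) - of_rat (of_int \<sigma> * q) * \<delta>) \<le> 2 * (of_int a * cmod u)"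
    using dom a0 \<sigma>(2) by (simp add: norm_mult less_imp_le)
  have "(of_int \<sigma> * q)^2 * of_int D \<in> \<int>"
    using disc \<sigma>(1) by (simp add: power_mult_distrib flip: of_int_power)
  moreover have "1 \<le> real_of_int a" using a0 by simp
  hence "1 \<le> of_int a * cmod u" using mult_mono[OF _ big] by fastforce
  ultimately show ?thesis unfolding quad_repr_def using rep conj by blast
qed

lemma vieta_difference_square:
  fixes z1 z2 :: complex and a b c :: int
  assumes sum: "of_int a * (z1 + z2) = - of_int b" and prod: "of_int a * (z1 * z2) = of_int c"
  shows "(of_int a * (z1 - z2))^2 = of_int (b^2 - 4 * a * c)"
proof -
  have "(of_int a * (z1 - z2))^2 = (of_int a * (z1 + z2))^2 - 4 * of_int a * (of_int a * (z1 * z2))"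
    by (simp add: power2_eq_square algebra_simps)
  thus ?thesis unfolding sum prod by simp
qed

text \<open>The measure a max(1,|z1|) max(1,|z2|) of a quadratic with roots z1, z2 always has a
  representation: it is an integer (a or |c|) unless exactly one root lies outside the
  unit disc, and that root is then real and dominant.\<close>
lemma quad_repr_quadratic:
  fixes z1 z2 \<delta> :: complex and a b c D :: int and q :: rat
  assumes a0: "a > 0" and sum: "of_int a * (z1 + z2) = - of_int b"
    and prod: "of_int a * (z1 * z2) = of_int c"
    and diff: "of_int a * (z1 - z2) = of_rat q * \<delta>" and \<delta>: "\<delta>^2 = of_int D"
  shows "quad_repr \<delta> D (of_int a * max 1 (cmod z1) * max 1 (cmod z2))"
proof -
  have "(of_rat (q^2 * of_int D) :: complex) = (of_int a * (z1 - z2))^2"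
    unfolding diff using \<delta> by (simp add: of_rat_mult of_rat_power power_mult_distrib)
  also have "\<dots> = of_rat (of_int (b^2 - 4 * a * c))"
    unfolding vieta_difference_square[OF sum prod] by (simp only: of_rat_of_int_eq)
  finally have disc: "q^2 * of_int D \<in> \<int>" unfolding of_rat_eq_iff by simp
  consider "cmod z1 \<le> 1" "cmod z2 \<le> 1" | "1 \<le> cmod z1" "1 \<le> cmod z2"
    | "cmod z2 < 1" "1 < cmod z1" | "cmod z1 < 1" "1 < cmod z2" by linarith
  thus ?thesis
  proof cases
    case 1
    thus ?thesis using quad_repr_int[of a] a0 by simp
  next
    case 2
    hence "of_int a * max 1 (cmod z1) * max 1 (cmod z2) = cmod (of_int a * (z1 * z2))"
      using a0 by (simp add: norm_mult)
    also have "\<dots> = of_int \<bar>c\<bar>" unfolding prod by simp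
    finally have M: "of_int a * max 1 (cmod z1) * max 1 (cmod z2) = of_int \<bar>c\<bar>" .
    have "1 * 1 * 1 \<le> of_int a * max 1 (cmod z1) * max 1 (cmod z2)"
      using a0 by (intro mult_mono) auto
    hence "\<bar>c\<bar> \<ge> 1" unfolding M by simp
    thus ?thesis unfolding M by (rule quad_repr_int)
  next
    case 3
    thus ?thesis using quad_repr_dominant_root[OF a0 sum prod diff disc] by simp
  next
    case 4
    have sum': "of_int a * (z2 + z1) = - of_int b" and prod': "of_int a * (z2 * z1) = of_int c"
      using sum prod by (simp_all only: add.commute mult.commute)
    have diff': "of_int a * (z2 - z1) = of_rat (- q) * \<delta>" and disc': "(- q)^2 * of_int D \<in> \<int>"
      using diff disc by (simp_all add: of_rat_minus algebra_simps)
    have "quad_repr \<delta> D (of_int a * cmod z2)"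
      using quad_repr_dominant_root[OF a0 sum' prod' diff' disc'] 4 by simp
    thus ?thesis using 4 by simp
  qed
qed

lemma discriminant_square:
  fixes \<alpha> :: complex and A B C :: int
  assumes "of_int A * \<alpha>^2 + of_int B * \<alpha> + of_int C = 0"
  shows "(2 * of_int A * \<alpha> + of_int B)^2 = of_int (B^2 - 4 * A * C)"
proof -
  have "(2 * of_int A * \<alpha> + of_int B)^2
      = 4 * of_int A * (of_int A * \<alpha>^2 + of_int B * \<alpha> + of_int C) + of_int (B^2 - 4 * A * C)"
    by (simp add: power2_eq_square algebra_simps)
  thus ?thesis unfolding assms by simp
qed

lemma quadratic_conjugate:
  fixes \<alpha> :: complex and b c r s :: rat
  assumes monic: "\<alpha>^2 + of_rat b * \<alpha> + of_rat c = 0" and irr: "\<alpha> \<notin> \<rat>" and s0: "s \<noteq> 0"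
  defines "\<gamma> \<equiv> of_rat r + of_rat s * \<alpha>" and "\<gamma>' \<equiv> of_rat r + of_rat s * (- of_rat b - \<alpha>)"
  obtains a b' c' :: int where "a > 0" "of_int a * (\<gamma> + \<gamma>') = - of_int b'"
    "of_int a * (\<gamma> * \<gamma>') = of_int c'" "of_int a * (\<gamma> - \<gamma>') = of_rat (of_int a * s) * (2 * \<alpha> + of_rat b)"
    "mahler_measure \<gamma> = of_int a * max 1 (cmod \<gamma>) * max 1 (cmod \<gamma>')"
proof -
  define \<alpha>' where "\<alpha>' = - of_rat b - \<alpha>"
  have "\<alpha> * \<alpha>' = of_rat c - (\<alpha>^2 + of_rat b * \<alpha> + of_rat c)"
    unfolding \<alpha>'_def by (simp add: power2_eq_square algebra_simps)
  hence prod_\<alpha>: "\<alpha> * \<alpha>' = of_rat c" unfolding monic by simp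
  have sum_\<alpha>: "\<alpha> + \<alpha>' = - of_rat b" unfolding \<alpha>'_def by simp
  have "\<gamma> * \<gamma>' = of_rat r * of_rat r + of_rat r * of_rat s * (\<alpha> + \<alpha>') + of_rat s * of_rat s * (\<alpha> * \<alpha>')"
    unfolding \<gamma>_def \<gamma>'_def \<alpha>'_def[symmetric] by (simp add: algebra_simps)
  also have "\<dots> = of_rat (r * r - r * s * b + s * s * c)"
    unfolding prod_\<alpha> sum_\<alpha> by (simp add: of_rat_add of_rat_diff of_rat_mult algebra_simps)
  finally have prod_rat: "\<gamma> * \<gamma>' = of_rat (r * r - r * s * b + s * s * c)" .
  have sum_rat: "\<gamma> + \<gamma>' = of_rat (2 * r - s * b)"
    unfolding \<gamma>_def \<gamma>'_def by (simp add: of_rat_diff of_rat_mult algebra_simps)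
  obtain a b' c' where a0: "a > 0" and cont: "content [:c', b', a:] = 1"
    and sum: "of_int a * (\<gamma> + \<gamma>') = - of_int b'" and prod: "of_int a * (\<gamma> * \<gamma>') = of_int c'"
    using primitive_quadratic_vieta[OF sum_rat prod_rat] .
  have "\<alpha>' = of_rat (- b) + of_rat (- 1) * \<alpha>" unfolding \<alpha>'_def by (simp add: of_rat_minus)
  hence "\<alpha>' \<notin> \<rat>" using rat_affine_irrational[OF _ irr, of "-1" "-b"] by simp
  hence "\<gamma> \<notin> \<rat>" "\<gamma>' \<notin> \<rat>"
    unfolding \<gamma>_def \<gamma>'_def \<alpha>'_def[symmetric] using rat_affine_irrational s0 irr by auto
  hence "mahler_measure \<gamma> = of_int a * max 1 (cmod \<gamma>) * max 1 (cmod \<gamma>')"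
    using mahler_measure_conjugates[OF a0 cont sum prod] by simp
  moreover have "of_int a * (\<gamma> - \<gamma>') = of_rat (of_int a * s) * (2 * \<alpha> + of_rat b)"
    unfolding \<gamma>_def \<gamma>'_def by (simp add: of_rat_mult algebra_simps)
  ultimately show ?thesis using that a0 sum prod by blast
qed

text \<open>Every non-zero \<gamma> in Q(\<alpha>), \<alpha> an irrational root of A x^2 + B x + C, has a
  representation w.r.t. \<delta> = 2A\<alpha> + B and D = B^2 - 4AC; note A(2\<alpha> + B/A) = \<delta>.\<close>
lemma quad_repr_rat_adjoin:
  fixes \<alpha> \<gamma> :: complex and A B C :: int
  assumes A0: "A > 0" and rel: "of_int A * \<alpha>^2 + of_int B * \<alpha> + of_int C = 0"
    and irr: "\<alpha> \<notin> \<rat>" and \<gamma>: "\<gamma> \<in> rat_adjoin \<alpha>" "\<gamma> \<noteq> 0"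
  shows "quad_repr (2 * of_int A * \<alpha> + of_int B) (B^2 - 4 * A * C) (mahler_measure \<gamma>)"
proof -
  define \<delta> where "\<delta> = 2 * of_int A * \<alpha> + of_int B"
  define b c :: rat where "b = of_int B / of_int A" and "c = of_int C / of_int A"
  have A_ne: "(of_int A :: complex) \<noteq> 0" using A0 by simp
  have bc: "of_int A * of_rat b = (of_int B :: complex)" "of_int A * of_rat c = (of_int C :: complex)"
    unfolding b_def c_def using A_ne by (simp_all add: of_rat_divide)
  have "of_int A * (\<alpha>^2 + of_rat b * \<alpha> + of_rat c) = 0"
    using rel unfolding bc[symmetric] by (simp add: algebra_simps)
  hence monic: "\<alpha>^2 + of_rat b * \<alpha> + of_rat c = 0" using A_ne by simp
  obtain r s where rs: "\<gamma> = of_rat r + of_rat s * \<alpha>"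
    using rat_adjoin_quadratic[OF monic irr \<gamma>(1)] .
  show ?thesis
  proof (cases "s = 0")
    case True
    thus ?thesis using quad_repr_rational[of \<gamma>] rs \<gamma>(2) by simp
  next
    case False
    define \<gamma>' where "\<gamma>' = of_rat r + of_rat s * (- of_rat b - \<alpha>)"
    obtain a b' c' where a0: "a > 0" and sum: "of_int a * (\<gamma> + \<gamma>') = - of_int b'"
      and prod: "of_int a * (\<gamma> * \<gamma>') = of_int c'"
      and diff: "of_int a * (\<gamma> - \<gamma>') = of_rat (of_int a * s) * (2 * \<alpha> + of_rat b)"
      and M: "mahler_measure \<gamma> = of_int a * max 1 (cmod \<gamma>) * max 1 (cmod \<gamma>')"
      using quadratic_conjugate[OF monic irr False, of r, folded rs \<gamma>'_def] .
    have "\<delta> = of_int A * (2 * \<alpha> + of_rat b)"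
      unfolding \<delta>_def bc(1)[symmetric] by (simp add: algebra_simps)
    hence "of_int a * (\<gamma> - \<gamma>') = of_rat (of_int a * s / of_int A) * \<delta>"
      unfolding diff using A_ne by (simp add: of_rat_mult of_rat_divide)
    moreover have "\<delta>^2 = of_int (B^2 - 4 * A * C)" unfolding \<delta>_def by (rule discriminant_square[OF rel])
    ultimately show ?thesis unfolding M \<delta>_def[symmetric] by (rule quad_repr_quadratic[OF a0 sum prod])
  qed
qed

section \<open>The gap\<close>

text \<open>The rationals q with q^2 D integral are closed under subtraction: the cross term
  2 q1 q2 D is integral because its square is.\<close>
lemma disc_integral_diff:
  fixes q1 q2 :: rat and D :: int
  assumes "q1^2 * of_int D \<in> \<int>" "q2^2 * of_int D \<in> \<int>"
  shows "(q1 - q2)^2 * of_int D \<in> \<int>"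
proof -
  have "(q1 * q2 * of_int D)^2 = (q1^2 * of_int D) * (q2^2 * of_int D)"
    by (simp add: power2_eq_square algebra_simps)
  hence "(q1 * q2 * of_int D)^2 \<in> \<int>" using assms by (simp only: Ints_mult)
  hence cross: "q1 * q2 * of_int D \<in> \<int>" by (rule rat_square_Ints)
  have "(q1 - q2)^2 * of_int D = q1^2 * of_int D + q2^2 * of_int D - 2 * (q1 * q2 * of_int D)"
    by (simp add: power2_eq_square algebra_simps)
  thus ?thesis using assms cross by (simp only: Ints_diff Ints_add Ints_mult Ints_numeral)
qed

text \<open>Norm bound: if q^2 D is integral, \<delta>^2 = D and \<delta> is irrational (or zero), then a
  non-zero t = e + q \<delta> and its conjugate e - q \<delta> have a non-zero integral product
  e^2 - q^2 D, so this product has modulus at least one.\<close>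
lemma conjugate_norm_ge_1:
  fixes \<delta> :: complex and D e :: int and q :: rat
  assumes disc: "q^2 * of_int D \<in> \<int>" and \<delta>: "\<delta>^2 = of_int D" and \<delta>_irr: "\<delta> = 0 \<or> \<delta> \<notin> \<rat>"
    and t0: "of_int e + of_rat q * \<delta> \<noteq> 0"
  shows "1 \<le> cmod ((of_int e + of_rat q * \<delta>) * (of_int e - of_rat q * \<delta>))"
proof -
  have "(of_int e + of_rat q * \<delta>) * (of_int e - of_rat q * \<delta>) = of_rat (of_int (e^2) - q^2 * of_int D)"
    using \<delta> by (simp add: of_rat_diff of_rat_mult of_rat_power power2_eq_square algebra_simps)
  moreover have "of_int (e^2) - q^2 * of_int D \<in> \<int>" using disc by simp
  ultimately obtain k :: int where k: "(of_int e + of_rat q * \<delta>) * (of_int e - of_rat q * \<delta>) = of_int k"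
    by (metis Ints_cases of_rat_of_int_eq)
  have "of_int e - of_rat q * \<delta> \<noteq> 0"
  proof
    assume "of_int e - of_rat q * \<delta> = 0"
    hence eq: "of_int e = of_rat q * \<delta>" by simp
    have "q = 0 \<or> \<delta> = 0"
    proof (rule ccontr)
      assume nz: "\<not> (q = 0 \<or> \<delta> = 0)"
      hence "\<delta> = of_rat (of_int e / q)" using eq by (simp add: of_rat_divide field_simps)
      thus False using \<delta>_irr nz by simp
    qed
    thus False using eq t0 by auto
  qed
  hence "k \<noteq> 0" using k t0 by auto
  thus ?thesis unfolding k by simp
qed

text \<open>Two represented measures M1 > M2 satisfy 4 M1^2 \<ge> 4 M2^2 + 1: apply the norm
  bound to t = 2M1 - 2M2, whose conjugate has modulus at most 2M1 + 2M2.\<close>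
lemma quad_repr_square_gap:
  fixes \<delta> :: complex and D :: int and M1 M2 :: real
  assumes r1: "quad_repr \<delta> D M1" and r2: "quad_repr \<delta> D M2"
    and \<delta>: "\<delta>^2 = of_int D" and \<delta>_irr: "\<delta> = 0 \<or> \<delta> \<notin> \<rat>" and less: "M2 < M1"
  shows "4 * M2^2 + 1 \<le> 4 * M1^2"
proof -
  obtain e1 q1 where q1: "q1^2 * of_int D \<in> \<int>" and h1: "complex_of_real (2 * M1) = of_int e1 + of_rat q1 * \<delta>"
    and c1: "cmod (of_int e1 - of_rat q1 * \<delta>) \<le> 2 * M1"
    using r1 unfolding quad_repr_def by blast
  obtain e2 q2 where q2: "q2^2 * of_int D \<in> \<int>" and h2: "complex_of_real (2 * M2) = of_int e2 + of_rat q2 * \<delta>"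
    and c2: "cmod (of_int e2 - of_rat q2 * \<delta>) \<le> 2 * M2"
    using r2 unfolding quad_repr_def by blast
  define t u where "t = of_int (e1 - e2) + of_rat (q1 - q2) * \<delta>" and "u = of_int (e1 - e2) - of_rat (q1 - q2) * \<delta>"
  have t: "t = complex_of_real (2 * (M1 - M2))"
    unfolding t_def using h1 h2 by (simp add: of_rat_diff algebra_simps)
  hence "t \<noteq> 0" using less by simp
  hence "1 \<le> cmod (t * u)" unfolding t_def u_def
    by (rule conjugate_norm_ge_1[OF disc_integral_diff[OF q1 q2] \<delta> \<delta>_irr])
  also have "\<dots> \<le> 2 * (M1 - M2) * (2 * M1 + 2 * M2)"
  proof -
    have "u = (of_int e1 - of_rat q1 * \<delta>) - (of_int e2 - of_rat q2 * \<delta>)"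
      unfolding u_def by (simp add: of_rat_diff algebra_simps)
    hence "cmod u \<le> cmod (of_int e1 - of_rat q1 * \<delta>) + cmod (of_int e2 - of_rat q2 * \<delta>)"
      by (simp only: norm_triangle_ineq4)
    hence "cmod u \<le> 2 * M1 + 2 * M2" using c1 c2 by linarith
    moreover have "cmod t = 2 * (M1 - M2)" unfolding t norm_of_real using less by simp
    ultimately show ?thesis unfolding norm_mult using less by (simp add: mult_left_mono)
  qed
  finally show ?thesis by (simp add: power2_eq_square algebra_simps)
qed

text \<open>The square gap implies the claimed gap: if M1 \<le> M2 + \<epsilon> with \<epsilon> = 1/(16 M2^4),
  then M1^2 \<le> M2^2 + 2 M2 \<epsilon> + \<epsilon>^2 < M2^2 + 1/4 since M2 \<epsilon> and \<epsilon> are at most 1/16.\<close>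
lemma gap_from_square_gap:
  fixes M1 M2 :: real
  assumes M2: "1 \<le> M2" and less: "M2 < M1" and sq: "4 * M2^2 + 1 \<le> 4 * M1^2"
  shows "M2 + 1 / (16 * M2^4) < M1"
proof (rule ccontr)
  define \<epsilon> where "\<epsilon> = 1 / (16 * M2^4)"
  assume "\<not> ?thesis"
  hence "M1 \<le> M2 + \<epsilon>" unfolding \<epsilon>_def by simp
  have pow: "1 \<le> M2^3" "1 \<le> M2^4" using M2 by (simp_all add: one_le_power)
  have \<epsilon>0: "0 < \<epsilon>" unfolding \<epsilon>_def using M2 by simp
  have \<epsilon>1: "\<epsilon> \<le> 1/16" unfolding \<epsilon>_def using pow by (intro divide_left_mono) auto
  have "M2 * \<epsilon> = 1 / (16 * M2^3)" unfolding \<epsilon>_def using M2 by (simp add: field_simps eval_nat_numeral)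
  also have "\<dots> \<le> 1/16" using pow M2 by (intro divide_left_mono) auto
  finally have \<epsilon>2: "M2 * \<epsilon> \<le> 1/16" .
  have "M1^2 \<le> (M2 + \<epsilon>)^2" using \<open>M1 \<le> M2 + \<epsilon>\<close> less M2 by (intro power_mono) auto
  also have "\<dots> = M2^2 + 2 * (M2 * \<epsilon>) + \<epsilon> * \<epsilon>" by (simp add: power2_eq_square algebra_simps)
  also have "\<dots> \<le> M2^2 + 2 * (1/16) + (1/16) * (1/16)"
    using \<epsilon>0 \<epsilon>1 \<epsilon>2 M2 by (intro add_mono mult_mono) auto
  finally show False using sq by simp
qed

lemma quad_repr_gap:
  assumes "quad_repr \<delta> D M1" "quad_repr \<delta> D M2" "\<delta>^2 = of_int D" "\<delta> = 0 \<or> \<delta> \<notin> \<rat>" "M2 < M1"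
  shows "M2 + 1 / (16 * M2^4) < M1"
  using gap_from_square_gap quad_repr_square_gap[OF assms] assms(2,5) unfolding quad_repr_def by blast

lemma quadratic_relation:
  fixes \<alpha> :: complex
  assumes "algebraic \<alpha>" "alg_degree \<alpha> \<le> 2" "\<alpha> \<notin> \<rat>"
  obtains A B C :: int where "A > 0" "of_int A * \<alpha>^2 + of_int B * \<alpha> + of_int C = 0"
proof -
  define P where "P = min_int_poly \<alpha>"
  have lead: "lead_coeff P > 0" and root: "poly (of_int_poly P) \<alpha> = 0"
    using min_int_poly_props[OF assms(1)] unfolding P_def by auto
  have "P \<noteq> 0" using lead by auto
  hence "\<not> degree P \<le> 1" using int_poly_linear_root_Rats[of P \<alpha>] root assms(3) by auto
  hence deg: "degree P = 2" using assms(2) unfolding alg_degree_def P_def by simp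
  define A B C where "A = poly.coeff P 2" and "B = poly.coeff P 1" and "C = poly.coeff P 0"
  have P: "P = [:C, B, A:]" unfolding A_def B_def C_def using deg by (intro poly_quadratic_coeffs) simp
  have "A > 0" using lead deg unfolding A_def by simp
  moreover have "of_int A * \<alpha>^2 + of_int B * \<alpha> + of_int C = 0"
    using root unfolding P by (simp add: of_int_hom.map_poly_pCons_hom algebra_simps power2_eq_square)
  ultimately show ?thesis using that by blast
qed

theorem mainTheorem12:
  fixes \<alpha> \<gamma> :: complex
  assumes "algebraic \<alpha>" and "\<alpha> \<noteq> 0" and "alg_degree \<alpha> \<le> 2"
    and "\<gamma> \<in> rat_adjoin \<alpha>" and "\<gamma> \<noteq> 0"
    and "mahler_measure \<gamma> > mahler_measure \<alpha>"
  shows "mahler_measure \<gamma> > mahler_measure \<alpha> + 1 / (16 * mahler_measure \<alpha> ^ 4)"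
proof (cases "\<alpha> \<in> \<rat>")
  case True
  hence "\<gamma> \<in> \<rat>" using assms(4) rat_adjoin_Rats by blast
  hence "quad_repr 0 0 (mahler_measure \<gamma>)" "quad_repr 0 0 (mahler_measure \<alpha>)"
    using quad_repr_rational True assms(2,5) by blast+
  thus ?thesis using quad_repr_gap assms(6) by simp
next
  case False
  obtain A B C where A0: "A > 0" and rel: "of_int A * \<alpha>^2 + of_int B * \<alpha> + of_int C = 0"
    using quadratic_relation[OF assms(1,3) False] .
  define \<delta> where "\<delta> = 2 * of_int A * \<alpha> + of_int B"
  have "\<alpha> \<in> rat_adjoin \<alpha>" unfolding rat_adjoin_def by blast
  hence "quad_repr \<delta> (B^2 - 4 * A * C) (mahler_measure \<gamma>)" "quad_repr \<delta> (B^2 - 4 * A * C) (mahler_measure \<alpha>)"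
    using quad_repr_rat_adjoin[OF A0 rel False] assms(2,4,5) unfolding \<delta>_def by blast+
  moreover have "\<delta>^2 = of_int (B^2 - 4 * A * C)" unfolding \<delta>_def by (rule discriminant_square[OF rel])
  moreover have "\<delta> = of_rat (of_int B) + of_rat (2 * of_int A) * \<alpha>" unfolding \<delta>_def by (simp add: of_rat_mult)
  hence "\<delta> \<notin> \<rat>" by (simp only:) (rule rat_affine_irrational[OF _ False], use A0 in simp)
  ultimately show ?thesis using quad_repr_gap assms(6) by blast
qed

end
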